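(* A labeled finite-state automaton $\mathcal{S}=(Q,E,\delta,Q_0,\Sigma,\ell)$ is initial-state opaque with respect to $Q_S\subset Q$ if and only if $Q_0\ne\emptyset \implies Q_0\not\subset Q_S$ and, for every $q_0\in Q_0\cap Q_S$, in the concurrent composition $\mathrm{CC}(\mathcal{S}_{\varepsilon},\mathcal{S}_{\mathrm{obs}}^{\varepsilon})$ all states reachable from $(q_0,\mathrm{UR}(Q_0\setminus Q_S))$ are of the form $(-,x)$ with $x\ne\emptyset$.
   Context: A labeled finite-state automaton (LFSA) $\mathcal{S}=(Q,E,\delta,Q_0,\Sigma,\ell)$ has finite state set $Q$, finite event alphabet $E$, transition relation $\delta\subset Q\times E\times Q$ (extended to event sequences), initial states $Q_0\subset Q$, output alphabet $\Sigma$, and labeling $\ell:E\to\Sigma\cup\{\epsilon\}$ (extended to sequences). Observable events $E_o=\{e:\ell(e)\in\Sigma\}$, unobservable events $E_{uo}=\{e:\ell(e)=\epsilon\}$. For $x\subset Q$, the unobservable reach is $\mathrm{UR}(x)=\bigcup_{q\in x}\bigcup_{s\in E_{uo}^*}\delta(q,s)$. $\mathcal{S}$ is initial-state opaque (ISO) with respect to secret states $Q_S\subset Q$ if for every run $q_0\xrightarrow{s}q$ with $q_0\in Q_0\cap Q_S$ there is a run $q_0'\xrightarrow{s'}q'$ with $q_0'\in Q_0\setminus Q_S$ and $\ell(s)=\ell(s')$. The observer $\mathcal{S}_{\mathrm{obs}}$ is the deterministic automaton with state set $2^Q$, alphabet $\ell(E_o)$, initial state $\mathrm{UR}(Q_0)$,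 and transitions $\delta_{\mathrm{obs}}(x,a)=\bigcup_{q\in x}\bigcup_{e_a\in E_o,\ell(e_a)=a,\ s\in E_{uo}^*}\delta(q,e_as)$ (so $\delta_{\mathrm{obs}}(\emptyset,a)=\emptyset$). $\mathcal{S}_{\varepsilon}$ is obtained from $\mathcal{S}$ by relabeling each transition $q\xrightarrow{e}q'$ as $q\xrightarrow{\ell(e)}q'$ if $e\in E_o$ and as $q\xrightarrow{\varepsilon}q'$ if $e\in E_{uo}$, with labeling $\ell'$ on $\ell(E_o)\cup\{\varepsilon\}$ being the identity on $\ell(E_o)$ and $\ell'(\varepsilon)=\epsilon$. $\mathcal{S}_{\mathrm{obs}}^{\varepsilon}$ is $\mathcal{S}_{\mathrm{obs}}$ with the additional (unused) event $\varepsilon$ and labeling $\ell'$. The concurrent composition $\mathrm{CC}(\mathcal{S}^1,\mathcal{S}^2)$ of two LFSAs $\mathcal{S}^i=(Q_i,E,\delta_i,Q_{0i},\Sigma,\ell)$ has states $Q_1\times Q_2$, initial states $Q_{01}\times Q_{02}$, and transitions: $((q_1,q_1'),(e,e'),(q_2,q_2'))$ for observable $e,e'$ with $\ell(e)=\ell(e')$, $(q_1,e,q_2)\in\delta_1$, $(q_1',e',q_2')\in\delta_2$; $((q_1,q_1'),(e,\epsilon),(q_2,q_1'))$ for unobservable $e$ with $(q_1,e,q_2)\in\delta_1$; and $((q_1,q_1'),(\epsilon,e),(q_1,q_2'))$ for unobservable $e$ with $(q_1',e,q_2')\in\delta_2$. Observable transitions with the same label are synchronized, unobservable ones interleave. 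*)

theory Defs
  imports Main
begin

text \<open>Labeled finite-state automata. The labeling returns None for the
empty output (unobservable events), Some a for an observable label a.\<close>

record ('q, 'e, 'o) lfsa =
  states :: "'q set"
  events :: "'e set"
  trans  :: "('q \<times> 'e \<times> 'q) set"
  init   :: "'q set"
  outs   :: "'o set"
  lab    :: "'e \<Rightarrow> 'o option"

definition lfsa_wf :: "('q, 'e, 'o) lfsa \<Rightarrow> bool" where
  "lfsa_wf S \<longleftrightarrow> finite (states S) \<and> finite (events S) \<and> finite (outs S)
     \<and> trans S \<subseteq> states S \<times> events S \<times> states S
     \<and> init S \<subseteq> states S
     \<and> (\<forall>e \<in> events S. lab S e = None \<or> the (lab S e) \<in> outs S)"

definition obs_events :: "('q, 'e, 'o) lfsa \<Rightarrow> 'e set" where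
  "obs_events S = {e \<in> events S. lab S e \<noteq> None}"

definition unobs_events :: "('q, 'e, 'o) lfsa \<Rightarrow> 'e set" where
  "unobs_events S = {e \<in> events S. lab S e = None}"

inductive run :: "('q \<times> 'e \<times> 'q) set \<Rightarrow> 'q \<Rightarrow> 'e list \<Rightarrow> 'q \<Rightarrow> bool"
  for \<delta> where
  run_Nil: "run \<delta> q [] q"
| run_Cons: "(q, e, q1) \<in> \<delta> \<Longrightarrow> run \<delta> q1 s q2 \<Longrightarrow> run \<delta> q (e # s) q2"

definition lab_seq :: "('q, 'e, 'o) lfsa \<Rightarrow> 'e list \<Rightarrow> 'o list" where
  "lab_seq S s = List.map_filter (lab S) s"

definition ISO :: "('q, 'e, 'o) lfsa \<Rightarrow> 'q set \<Rightarrow> bool" where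
  "ISO S QS \<longleftrightarrow>
     (\<forall>q0 s q. q0 \<in> init S \<inter> QS \<and> run (trans S) q0 s q \<longrightarrow>
        (\<exists>q0' s' q'. q0' \<in> init S - QS \<and> run (trans S) q0' s' q' \<and> lab_seq S s = lab_seq S s'))"

definition UR :: "('q, 'e, 'o) lfsa \<Rightarrow> 'q set \<Rightarrow> 'q set" where
  "UR S x = {q'. \<exists>q \<in> x. \<exists>s. set s \<subseteq> unobs_events S \<and> run (trans S) q s q'}"

definition delta_obs :: "('q, 'e, 'o) lfsa \<Rightarrow> 'q set \<Rightarrow> 'o \<Rightarrow> 'q set" where
  "delta_obs S x a = {q'. \<exists>q \<in> x. \<exists>e s. e \<in> obs_events S \<and> lab S e = Some a
      \<and> set s \<subseteq> unobs_events S \<and> run (trans S) q (e # s) q'}"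

text \<open>S_eps: events are the observed outputs (Some a) plus the fresh event epsilon (None);
  the labeling is the identity (epsilon maps to the empty output).\<close>
definition S_eps :: "('q, 'e, 'o) lfsa \<Rightarrow> ('q, 'o option, 'o) lfsa" where
  "S_eps S = \<lparr> states = states S,
               events = lab S ` obs_events S \<union> {None},
               trans = {(q, lab S e, q') | q e q'. (q, e, q') \<in> trans S},
               init = init S,
               outs = outs S,
               lab = id \<rparr>"

text \<open>The observer with the additional unused event epsilon (None).\<close>
definition S_obs_eps :: "('q, 'e, 'o) lfsa \<Rightarrow> ('q set, 'o option, 'o) lfsa" where
  "S_obs_eps S = \<lparr> states = Pow (states S),
                   events = lab S ` obs_events S \<union> {None},
                   trans = {(x, Some a, delta_obs S x a) | x a.
                              x \<subseteq> states S \<and> Some a \<in> lab S ` obs_events S},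
                   init = {UR S (init S)},
                   outs = outs S,
                   lab = id \<rparr>"

text \<open>Concurrent composition of two LFSAs over the same event set and labeling
  (the event set and labeling of the first one are used). Events of the composition
  are pairs of (event or epsilon), epsilon being None.\<close>
definition CC :: "('a, 'e, 'o) lfsa \<Rightarrow> ('b, 'e, 'o) lfsa \<Rightarrow> ('a \<times> 'b, 'e option \<times> 'e option, 'o) lfsa" where
  "CC S1 S2 = \<lparr> states = states S1 \<times> states S2,
                events = {(Some e, Some e') | e e'. e \<in> obs_events S1 \<and> e' \<in> obs_events S1 \<and> lab S1 e = lab S1 e'}
                         \<union> {(Some e, None) | e. e \<in> unobs_events S1}
                         \<union> {(None, Some e) | e. e \<in> unobs_events S1},
                trans = {((q1, p1), (Some e, Some e'), (q2, p2)) | q1 p1 e e' q2 p2.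
                           e \<in> obs_events S1 \<and> e' \<in> obs_events S1 \<and> lab S1 e = lab S1 e'
                           \<and> (q1, e, q2) \<in> trans S1 \<and> (p1, e', p2) \<in> trans S2}
                      \<union> {((q1, p), (Some e, None), (q2, p)) | q1 p e q2.
                           e \<in> unobs_events S1 \<and> (q1, e, q2) \<in> trans S1}
                      \<union> {((q, p1), (None, Some e), (q, p2)) | q p1 e p2.
                           e \<in> unobs_events S1 \<and> (p1, e, p2) \<in> trans S2},
                init = init S1 \<times> init S2,
                outs = outs S1,
                lab = (\<lambda>(a, b). case a of Some e \<Rightarrow> lab S1 e
                                         | None \<Rightarrow> (case b of Some e \<Rightarrow> lab S1 e | None \<Rightarrow> None)) \<rparr>"

definition step_rel :: "('q, 'e, 'o) lfsa \<Rightarrow> ('q \<times> 'q) set" where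
  "step_rel S = {(q, q'). \<exists>e. (q, e, q') \<in> trans S}"

definition reachable_from :: "('q, 'e, 'o) lfsa \<Rightarrow> 'q \<Rightarrow> 'q set" where
  "reachable_from S q = {q'. (q, q') \<in> (step_rel S)\<^sup>*}"

end

theory Submission
  imports Defs
begin

text \<open>In the composition, the first component follows a run s of S from q0 while the second
  component is driven by the observations of s only, so it is the observer's state estimate
  after reading the observation of s from UR(Q0 - QS). That estimate is nonempty exactly when
  some run from a non-secret initial state yields the same observation. Hence the reachability
  condition at q0 says that every run from q0 is matched by one from Q0 - QS, which is ISO; the
  first condition is ISO applied to the empty run.\<close>

lemma run_append: "run \<delta> q s q' \<Longrightarrow> run \<delta> q' t q'' \<Longrightarrow> run \<delta> q (s @ t) q''"
  by (induction rule: run.induct) (auto intro: run.run_Cons)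

lemma run_snoc: "run \<delta> q s q' \<Longrightarrow> (q', e, q'') \<in> \<delta> \<Longrightarrow> run \<delta> q (s @ [e]) q''"
  by (auto intro: run_append run.intros)

lemma run_target_in_states:
  assumes "lfsa_wf S" "run (trans S) q s q'" "s \<noteq> [] \<or> q \<in> states S"
  shows "q' \<in> states S"
  using assms(2,3)
proof (induction rule: run.induct)
  case (run_Cons q e q1 s q2)
  then have "q1 \<in> states S" using assms(1) unfolding lfsa_wf_def by blast
  then show ?case using run_Cons.IH by blast
qed simp

lemma trans_lab_None_unobs:
  "lfsa_wf S \<Longrightarrow> (q, e, q') \<in> trans S \<Longrightarrow> lab S e = None \<Longrightarrow> e \<in> unobs_events S"
  unfolding lfsa_wf_def unobs_events_def by blast

lemma trans_lab_Some_obs: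
  "lfsa_wf S \<Longrightarrow> (q, e, q') \<in> trans S \<Longrightarrow> lab S e = Some a \<Longrightarrow> e \<in> obs_events S"
  unfolding lfsa_wf_def obs_events_def by blast

lemma lab_seq_simps [simp]:
  "lab_seq S [] = []"
  "lab_seq S (e # s) = (case lab S e of None \<Rightarrow> lab_seq S s | Some a \<Rightarrow> a # lab_seq S s)"
  by (simp_all add: lab_seq_def split: option.split)

lemma lab_seq_append [simp]: "lab_seq S (s @ t) = lab_seq S s @ lab_seq S t"
  by (simp add: lab_seq_def List.map_filter_def)

lemma lab_seq_unobs: "set s \<subseteq> unobs_events S \<Longrightarrow> lab_seq S s = []"
  by (induction s) (auto simp: unobs_events_def)

lemma UR_subset_states: "lfsa_wf S \<Longrightarrow> X \<subseteq> states S \<Longrightarrow> UR S X \<subseteq> states S"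
  unfolding UR_def by (auto intro: run_target_in_states)

lemma delta_obs_subset_states: "lfsa_wf S \<Longrightarrow> delta_obs S Y a \<subseteq> states S"
  unfolding delta_obs_def by (auto intro: run_target_in_states)

lemma subset_UR: "X \<subseteq> UR S X"
  unfolding UR_def by (force intro: run.run_Nil)

definition unobs_closed :: "('q, 'e, 'o) lfsa \<Rightarrow> 'q set \<Rightarrow> bool" where
  "unobs_closed S Y \<longleftrightarrow> (\<forall>q e q'. q \<in> Y \<longrightarrow> (q, e, q') \<in> trans S \<longrightarrow> lab S e = None \<longrightarrow> q' \<in> Y)"

lemma unobs_closed_UR:
  assumes "lfsa_wf S" shows "unobs_closed S (UR S X)"
  unfolding unobs_closed_def
proof (intro allI impI)
  fix q e q' assume "q \<in> UR S X" "(q, e, q') \<in> trans S" "lab S e = None"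
  moreover obtain q0 s where "q0 \<in> X" "set s \<subseteq> unobs_events S" "run (trans S) q0 s q"
    using \<open>q \<in> UR S X\<close> unfolding UR_def by blast
  moreover have "e \<in> unobs_events S" using assms \<open>(q, e, q') \<in> trans S\<close> \<open>lab S e = None\<close>
    by (rule trans_lab_None_unobs)
  ultimately have "set (s @ [e]) \<subseteq> unobs_events S" "run (trans S) q0 (s @ [e]) q'"
    using run_snoc by auto
  then show "q' \<in> UR S X"
    unfolding UR_def using \<open>q0 \<in> X\<close> by blast
qed

lemma unobs_closed_delta_obs:
  assumes "lfsa_wf S" shows "unobs_closed S (delta_obs S Y a)"
  unfolding unobs_closed_def
proof (intro allI impI)
  fix q e q' assume "q \<in> delta_obs S Y a" "(q, e, q') \<in> trans S" "lab S e = None"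
  moreover obtain q0 e0 s where "q0 \<in> Y" "e0 \<in> obs_events S" "lab S e0 = Some a"
      "set s \<subseteq> unobs_events S" "run (trans S) q0 (e0 # s) q"
    using \<open>q \<in> delta_obs S Y a\<close> unfolding delta_obs_def by blast
  moreover have "e \<in> unobs_events S" using assms \<open>(q, e, q') \<in> trans S\<close> \<open>lab S e = None\<close>
    by (rule trans_lab_None_unobs)
  ultimately have "set (s @ [e]) \<subseteq> unobs_events S" "run (trans S) q0 (e0 # s @ [e]) q'"
    using run_snoc[of "trans S" q0 "e0 # s" q e q'] by auto
  then show "q' \<in> delta_obs S Y a"
    unfolding delta_obs_def using \<open>q0 \<in> Y\<close> \<open>e0 \<in> obs_events S\<close> \<open>lab S e0 = Some a\<close> by blast
qed

lemma run_in_foldl_delta_obs: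
  assumes "lfsa_wf S"
  shows "run (trans S) q s q' \<Longrightarrow> q \<in> Y \<Longrightarrow> unobs_closed S Y
    \<Longrightarrow> q' \<in> foldl (delta_obs S) Y (lab_seq S s)"
proof (induction arbitrary: Y rule: run.induct)
  case (run_Nil q)
  then show ?case by simp
next
  case (run_Cons q e q1 s q2)
  show ?case
  proof (cases "lab S e")
    case None
    then have "q1 \<in> Y" using run_Cons.hyps(1) run_Cons.prems unfolding unobs_closed_def by blast
    then have "q2 \<in> foldl (delta_obs S) Y (lab_seq S s)" using run_Cons.prems(2) by (rule run_Cons.IH)
    then show ?thesis using None by simp
  next
    case (Some a)
    have "e \<in> obs_events S" using assms run_Cons.hyps(1) Some by (rule trans_lab_Some_obs)
    moreover have "run (trans S) q [e] q1" by (rule run.run_Cons[OF run_Cons.hyps(1) run.run_Nil])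
    ultimately have "q1 \<in> delta_obs S Y a"
      unfolding delta_obs_def using run_Cons.prems(1) Some
      by (intro CollectI bexI[of _ q] exI[of _ e] exI[of _ "[]"]) simp_all
    then have "q2 \<in> foldl (delta_obs S) (delta_obs S Y a) (lab_seq S s)"
      using unobs_closed_delta_obs[OF assms] by (rule run_Cons.IH)
    then show ?thesis using Some by simp
  qed
qed

lemma foldl_delta_obs_run:
  "q' \<in> foldl (delta_obs S) Y w \<Longrightarrow> \<exists>q\<in>Y. \<exists>s. run (trans S) q s q' \<and> lab_seq S s = w"
proof (induction w arbitrary: Y)
  case Nil
  then have "run (trans S) q' [] q'" "lab_seq S [] = []" "q' \<in> Y" by (simp_all add: run.run_Nil)
  then show ?case by blast
next
  case (Cons a w)
  from Cons.prems have "q' \<in> foldl (delta_obs S) (delta_obs S Y a) w" by simp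
  then obtain q1 s where "q1 \<in> delta_obs S Y a" "run (trans S) q1 s q'" "lab_seq S s = w"
    using Cons.IH by blast
  moreover from \<open>q1 \<in> delta_obs S Y a\<close> obtain q e u where "q \<in> Y" "lab S e = Some a"
      "set u \<subseteq> unobs_events S" "run (trans S) q (e # u) q1"
    unfolding delta_obs_def by blast
  ultimately have "run (trans S) q (e # u @ s) q'" "lab_seq S (e # u @ s) = a # w"
    using run_append[of "trans S" q "e # u" q1 s q'] lab_seq_unobs[of u S] by simp_all
  with \<open>q \<in> Y\<close> show ?case by blast
qed

lemma mem_foldl_delta_obs_UR_iff:
  assumes "lfsa_wf S"
  shows "q' \<in> foldl (delta_obs S) (UR S X) w \<longleftrightarrow>
    (\<exists>q s. q \<in> X \<and> run (trans S) q s q' \<and> w = lab_seq S s)"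
proof
  assume "q' \<in> foldl (delta_obs S) (UR S X) w"
  then obtain q s where "q \<in> UR S X" "run (trans S) q s q'" "lab_seq S s = w"
    by (blast dest: foldl_delta_obs_run)
  moreover from \<open>q \<in> UR S X\<close> obtain q0 u where "q0 \<in> X" "set u \<subseteq> unobs_events S"
      "run (trans S) q0 u q"
    unfolding UR_def by blast
  ultimately have "run (trans S) q0 (u @ s) q'" "lab_seq S (u @ s) = w"
    by (simp_all add: run_append lab_seq_unobs)
  with \<open>q0 \<in> X\<close> show "\<exists>q s. q \<in> X \<and> run (trans S) q s q' \<and> w = lab_seq S s" by metis
next
  assume "\<exists>q s. q \<in> X \<and> run (trans S) q s q' \<and> w = lab_seq S s"
  then obtain q s where "q \<in> X" "run (trans S) q s q'" "lab_seq S s = w" by auto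
  from \<open>q \<in> X\<close> have "q \<in> UR S X" by (rule subsetD[OF subset_UR])
  with \<open>run (trans S) q s q'\<close> have "q' \<in> foldl (delta_obs S) (UR S X) (lab_seq S s)"
    using unobs_closed_UR[OF assms] by (rule run_in_foldl_delta_obs[OF assms])
  then show "q' \<in> foldl (delta_obs S) (UR S X) w" using \<open>lab_seq S s = w\<close> by simp
qed

lemma step_rel_CC_iff:
  "((q, p), (q', x)) \<in> step_rel (CC S1 S2) \<longleftrightarrow>
    (\<exists>e e'. e \<in> obs_events S1 \<and> e' \<in> obs_events S1 \<and> lab S1 e = lab S1 e'
       \<and> (q, e, q') \<in> trans S1 \<and> (p, e', x) \<in> trans S2) \<or>
    (x = p \<and> (\<exists>e \<in> unobs_events S1. (q, e, q') \<in> trans S1)) \<or>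
    (q' = q \<and> (\<exists>e \<in> unobs_events S1. (p, e, x) \<in> trans S2))"
  unfolding step_rel_def CC_def by (auto; blast)

lemma obs_events_S_eps: "obs_events (S_eps S) = lab S ` obs_events S"
  unfolding obs_events_def S_eps_def by auto

lemma unobs_events_S_eps: "unobs_events (S_eps S) = {None}"
  unfolding unobs_events_def S_eps_def by auto

lemma lab_S_eps: "lab (S_eps S) = id"
  unfolding S_eps_def by simp

lemma trans_S_eps_iff: "(q, a, q') \<in> trans (S_eps S) \<longleftrightarrow> (\<exists>e. (q, e, q') \<in> trans S \<and> lab S e = a)"
  unfolding S_eps_def by auto

lemma trans_S_obs_eps_iff:
  "(p, a, x) \<in> trans (S_obs_eps S) \<longleftrightarrow>
    (\<exists>b. a = Some b \<and> x = delta_obs S p b \<and> p \<subseteq> states S \<and> Some b \<in> lab S ` obs_events S)"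
  unfolding S_obs_eps_def by auto

lemma step_rel_CC_observer_iff:
  assumes "lfsa_wf S"
  shows "((q, p), (q', x)) \<in> step_rel (CC (S_eps S) (S_obs_eps S)) \<longleftrightarrow>
    (x = p \<and> (\<exists>e. (q, e, q') \<in> trans S \<and> lab S e = None)) \<or>
    (p \<subseteq> states S \<and> (\<exists>e a. (q, e, q') \<in> trans S \<and> lab S e = Some a \<and> x = delta_obs S p a))"
    (is "?step \<longleftrightarrow> ?unobs \<or> ?obs")
proof
  assume ?step
  then consider
      (obs) a where "(q, a, q') \<in> trans (S_eps S)" "(p, a, x) \<in> trans (S_obs_eps S)"
    | (unobs) "x = p" "(q, None, q') \<in> trans (S_eps S)"
    | (observer_eps) "(p, None, x) \<in> trans (S_obs_eps S)"
    by (auto simp: step_rel_CC_iff unobs_events_S_eps lab_S_eps)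
  then show "?unobs \<or> ?obs"
    unfolding trans_S_eps_iff trans_S_obs_eps_iff by cases blast+
next
  assume "?unobs \<or> ?obs"
  then show ?step
  proof
    assume ?unobs
    then show ?step by (auto simp: step_rel_CC_iff unobs_events_S_eps trans_S_eps_iff)
  next
    assume ?obs
    then obtain e a where "p \<subseteq> states S" "(q, e, q') \<in> trans S" "lab S e = Some a"
        "x = delta_obs S p a"
      by blast
    moreover have "e \<in> obs_events S" using assms calculation(2,3) by (rule trans_lab_Some_obs)
    ultimately have "Some a \<in> obs_events (S_eps S)" "(q, Some a, q') \<in> trans (S_eps S)"
        "(p, Some a, x) \<in> trans (S_obs_eps S)"
      by (force simp: obs_events_S_eps trans_S_eps_iff trans_S_obs_eps_iff)+
    then show ?step unfolding step_rel_CC_iff lab_S_eps by blast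
  qed
qed

lemma run_imp_rtrancl_step_rel_CC:
  assumes "lfsa_wf S"
  shows "run (trans S) q s q' \<Longrightarrow> p \<subseteq> states S \<Longrightarrow>
    ((q, p), (q', foldl (delta_obs S) p (lab_seq S s))) \<in> (step_rel (CC (S_eps S) (S_obs_eps S)))\<^sup>*"
proof (induction arbitrary: p rule: run.induct)
  case (run_Nil q)
  then show ?case by simp
next
  case (run_Cons q e q1 s q2)
  show ?case
  proof (cases "lab S e")
    case None
    then have "((q, p), (q1, p)) \<in> step_rel (CC (S_eps S) (S_obs_eps S))"
      using run_Cons.hyps(1) by (auto simp: step_rel_CC_observer_iff[OF assms])
    with run_Cons.IH[OF run_Cons.prems] None show ?thesis
      by (simp add: converse_rtrancl_into_rtrancl)
  next
    case (Some a)
    then have "((q, p), (q1, delta_obs S p a)) \<in> step_rel (CC (S_eps S) (S_obs_eps S))"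
      using run_Cons.hyps(1) run_Cons.prems by (auto simp: step_rel_CC_observer_iff[OF assms])
    with run_Cons.IH[OF delta_obs_subset_states[OF assms]] Some show ?thesis
      by (simp add: converse_rtrancl_into_rtrancl)
  qed
qed

lemma rtrancl_step_rel_CC_imp_run:
  assumes "lfsa_wf S"
    and "((q, p), (q', x)) \<in> (step_rel (CC (S_eps S) (S_obs_eps S)))\<^sup>*"
  shows "\<exists>s. run (trans S) q s q' \<and> x = foldl (delta_obs S) p (lab_seq S s)"
  using assms(2)
proof (induction rule: rtrancl_induct2)
  case refl
  have "run (trans S) q [] q" by (rule run.run_Nil)
  then show ?case by fastforce
next
  case (step q1 x1 q2 x2)
  then obtain s where s: "run (trans S) q s q1" "x1 = foldl (delta_obs S) p (lab_seq S s)"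
    by blast
  from step.hyps(2) obtain e where "(q1, e, q2) \<in> trans S"
      "x2 = foldl (delta_obs S) x1 (lab_seq S [e])"
    by (auto simp: step_rel_CC_observer_iff[OF assms(1)])
  with s have "run (trans S) q (s @ [e]) q2" "x2 = foldl (delta_obs S) p (lab_seq S (s @ [e]))"
    by (simp_all add: run_snoc)
  then show ?case by blast
qed

lemma reachable_from_CC_observer_iff:
  assumes "lfsa_wf S" and "p \<subseteq> states S"
  shows "(q', x) \<in> reachable_from (CC (S_eps S) (S_obs_eps S)) (q, p) \<longleftrightarrow>
    (\<exists>s. run (trans S) q s q' \<and> x = foldl (delta_obs S) p (lab_seq S s))"
  unfolding reachable_from_def
  using run_imp_rtrancl_step_rel_CC[OF assms(1) _ assms(2)] rtrancl_step_rel_CC_imp_run[OF assms(1)]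
  by blast

lemma reachable_from_CC_nonempty_iff:
  assumes "lfsa_wf S" and "X \<subseteq> states S"
  shows "(\<forall>q x. (q, x) \<in> reachable_from (CC (S_eps S) (S_obs_eps S)) (q0, UR S X) \<longrightarrow> x \<noteq> {})
    \<longleftrightarrow> (\<forall>s q. run (trans S) q0 s q \<longrightarrow>
          (\<exists>q0' s' q'. q0' \<in> X \<and> run (trans S) q0' s' q' \<and> lab_seq S s = lab_seq S s'))"
proof -
  have "(\<forall>q x. (q, x) \<in> reachable_from (CC (S_eps S) (S_obs_eps S)) (q0, UR S X) \<longrightarrow> x \<noteq> {})
    \<longleftrightarrow> (\<forall>s q. run (trans S) q0 s q \<longrightarrow> foldl (delta_obs S) (UR S X) (lab_seq S s) \<noteq> {})"
    by (auto simp: reachable_from_CC_observer_iff[OF assms(1) UR_subset_states[OF assms]])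
  also have "\<dots> \<longleftrightarrow> (\<forall>s q. run (trans S) q0 s q \<longrightarrow>
          (\<exists>q0' s' q'. q0' \<in> X \<and> run (trans S) q0' s' q' \<and> lab_seq S s = lab_seq S s'))"
    unfolding ex_in_conv[symmetric] mem_foldl_delta_obs_UR_iff[OF assms(1)] by (meson sym)
  finally show ?thesis .
qed

theorem theorem5:
  fixes S :: "('q, 'e, 'o) lfsa" and QS :: "'q set"
  assumes "lfsa_wf S" and "QS \<subseteq> states S"
  shows "ISO S QS \<longleftrightarrow>
           ((init S \<noteq> {} \<longrightarrow> \<not> init S \<subseteq> QS) \<and>
            (\<forall>q0 \<in> init S \<inter> QS.
               \<forall>q x. (q, x) \<in> reachable_from (CC (S_eps S) (S_obs_eps S)) (q0, UR S (init S - QS))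
                      \<longrightarrow> x \<noteq> {}))"
proof -
  have "init S - QS \<subseteq> states S" using assms(1) unfolding lfsa_wf_def by blast
  note reachable_iff = reachable_from_CC_nonempty_iff[OF assms(1) this]
  have "ISO S QS \<longleftrightarrow> (\<forall>q0 \<in> init S \<inter> QS.
      \<forall>q x. (q, x) \<in> reachable_from (CC (S_eps S) (S_obs_eps S)) (q0, UR S (init S - QS))
        \<longrightarrow> x \<noteq> {})"
    by (simp only: reachable_iff ISO_def) blast
  moreover have "ISO S QS \<Longrightarrow> init S \<noteq> {} \<longrightarrow> \<not> init S \<subseteq> QS"
    unfolding ISO_def using run.run_Nil by fastforce
  ultimately show ?thesis by blast
qed

end
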